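(* Let $n,m\ge1$, $V_1=\mathbb{C}^n$, $V_2=\mathbb{C}^m$. Let $\mathscr{Z}$ be an equidimensional subspace arrangement of codimension $k$ in $V_1$ and $\mathscr{C}_0\supseteq\mathscr{Z}$ a reduced complete intersection subspace arrangement of codimension $k$ in $V_1$, with $\mathcal{I}_{\mathscr{C}_0}=(h_1,\dots,h_k)\subseteq S^1=\mathbb{C}[x_1,\dots,x_n]$ radical, $(h_1,\dots,h_k)$ a homogeneous regular sequence. Then $\mathscr{C}_0\times V_2$ is a reduced complete intersection subspace arrangement of codimension $k$ in $V_1\times V_2$ (defined by $h_1\otimes1,\dots,h_k\otimes1$) containing $\mathscr{Z}\times V_2$, and for all $q\in\mathbb{N}$, $\Omega^q(\log(\mathscr{Z}\times V_2/\mathscr{C}_0\times V_2))=\sum_{j=0}^q\Omega^j(\log\mathscr{Z}/\mathscr{C}_0)\otimes\Omega^{q-j}[V_2]$, where $\Omega^{p}[V_2]$ is the module of polynomial $p$-forms on $V_2$ and the right-hand side is viewed inside $\frac1h\Omega^q[V_1\times V_2]$.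
   Context: For a vector space $W$, $\Omega^q[W]$ denotes polynomial differential $q$-forms on $W$. For an equidimensional subspace arrangement $\mathscr{Z}$ of codimension $k$ in $W$ (finite set of linear subspaces, identified with union, radical ideal $\mathcal{I}_\mathscr{Z}$) and a reduced complete intersection arrangement $\mathscr{C}\supseteq\mathscr{Z}$ of codimension $k$ with $\mathcal{I}_\mathscr{C}=(h_1,\dots,h_k)$ radical, homogeneous regular sequence, $h=h_1\cdots h_k$: $\Omega^q(\log\mathscr{Z}/\mathscr{C})=\{\omega\in\frac1h\Omega^q[W]:\ \mathcal{I}_\mathscr{Z}\omega\subseteq\frac1h\mathcal{I}_\mathscr{C}\Omega^q[W],\ d(\mathcal{I}_\mathscr{Z})\wedge\omega\subseteq\frac1h\mathcal{I}_\mathscr{C}\Omega^{q+1}[W]\}$. *)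

theory Defs
  imports Complex_Main "HOL-Library.Poly_Mapping"
begin

text \<open>The polynomial ring of C^N is the subring of
  polynomials whose variables lie in {..<N}.  Points of C^N are functions nat to complex
  vanishing at indices >= N.\<close>

type_synonym mpoly = "(nat \<Rightarrow>\<^sub>0 nat) \<Rightarrow>\<^sub>0 complex"

definition pvars :: "mpoly \<Rightarrow> nat set" where
  "pvars p = (\<Union>a\<in>Poly_Mapping.keys p. Poly_Mapping.keys (a :: nat \<Rightarrow>\<^sub>0 nat))"

definition peval :: "mpoly \<Rightarrow> (nat \<Rightarrow> complex) \<Rightarrow> complex" where
  "peval p x = (\<Sum>a\<in>Poly_Mapping.keys p. Poly_Mapping.lookup p a * (\<Prod>i\<in>Poly_Mapping.keys a. x i ^ Poly_Mapping.lookup a i))"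

definition mdeg :: "(nat \<Rightarrow>\<^sub>0 nat) \<Rightarrow> nat" where
  "mdeg a = (\<Sum>i\<in>Poly_Mapping.keys a. Poly_Mapping.lookup a i)"

definition homogeneous :: "mpoly \<Rightarrow> bool" where
  "homogeneous p \<longleftrightarrow> (\<exists>d. \<forall>a\<in>Poly_Mapping.keys p. mdeg a = d)"

definition pdiff :: "nat \<Rightarrow> mpoly \<Rightarrow> mpoly" where
  "pdiff i p = (\<Sum>a\<in>Poly_Mapping.keys p. Poly_Mapping.single (a - Poly_Mapping.single i 1)
                                (Poly_Mapping.lookup p a * of_nat (Poly_Mapping.lookup a i)))"

definition polys :: "nat \<Rightarrow> mpoly set" where
  "polys N = {p. pvars p \<subseteq> {..<N}}"

definition cspace :: "nat \<Rightarrow> (nat \<Rightarrow> complex) set" where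
  "cspace N = {x. \<forall>i\<ge>N. x i = 0}"

definition van_ideal :: "nat \<Rightarrow> (nat \<Rightarrow> complex) set \<Rightarrow> mpoly set" where
  "van_ideal N Z = {f \<in> polys N. \<forall>x\<in>Z. peval f x = 0}"

definition gen_ideal :: "nat \<Rightarrow> (nat \<Rightarrow> mpoly) \<Rightarrow> nat \<Rightarrow> mpoly set" where
  "gen_ideal N hs k = {p. \<exists>g. (\<forall>i<k. g i \<in> polys N) \<and> p = (\<Sum>i<k. g i * hs i)}"

definition radical_ideal :: "nat \<Rightarrow> mpoly set \<Rightarrow> bool" where
  "radical_ideal N I \<longleftrightarrow> (\<forall>f r. f \<in> polys N \<longrightarrow> 0 < r \<longrightarrow> f ^ r \<in> I \<longrightarrow> f \<in> I)"

definition regular_seq :: "nat \<Rightarrow> (nat \<Rightarrow> mpoly) \<Rightarrow> nat \<Rightarrow> bool" where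
  "regular_seq N hs k \<longleftrightarrow>
     (\<forall>i<k. hs i \<in> polys N) \<and> 1 \<notin> gen_ideal N hs k \<and>
     (\<forall>i<k. \<forall>g\<in>polys N. g * hs i \<in> gen_ideal N hs i \<longrightarrow> g \<in> gen_ideal N hs i)"

definition lin_subspace :: "nat \<Rightarrow> (nat \<Rightarrow> complex) set \<Rightarrow> bool" where
  "lin_subspace N L \<longleftrightarrow> L \<subseteq> cspace N \<and> (\<lambda>_. 0) \<in> L \<and>
     (\<forall>x\<in>L. \<forall>y\<in>L. (\<lambda>i. x i + y i) \<in> L) \<and> (\<forall>c. \<forall>x\<in>L. (\<lambda>i. c * x i) \<in> L)"

definition has_dim :: "(nat \<Rightarrow> complex) set \<Rightarrow> nat \<Rightarrow> bool" where
  "has_dim L d \<longleftrightarrow> (\<exists>v :: nat \<Rightarrow> nat \<Rightarrow> complex.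
      (\<forall>i<d. v i \<in> L) \<and>
      (\<forall>c. (\<forall>j. (\<Sum>i<d. c i * v i j) = 0) \<longrightarrow> (\<forall>i<d. c i = 0)) \<and>
      L = {x. \<exists>c. x = (\<lambda>j. \<Sum>i<d. c i * v i j)})"

definition subspace_arrangement :: "nat \<Rightarrow> nat \<Rightarrow> (nat \<Rightarrow> complex) set \<Rightarrow> bool" where
  "subspace_arrangement N k Z \<longleftrightarrow> k \<le> N \<and>
     (\<exists>A. finite A \<and> A \<noteq> {} \<and> (\<forall>L\<in>A. lin_subspace N L \<and> has_dim L (N - k)) \<and> Z = \<Union>A)"

definition reduced_CI :: "nat \<Rightarrow> nat \<Rightarrow> (nat \<Rightarrow> complex) set \<Rightarrow> (nat \<Rightarrow> mpoly) \<Rightarrow> bool" where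
  "reduced_CI N k C hs \<longleftrightarrow> subspace_arrangement N k C \<and>
     van_ideal N C = gen_ideal N hs k \<and> radical_ideal N (gen_ideal N hs k) \<and>
     regular_seq N hs k \<and> (\<forall>i<k. homogeneous (hs i))"

text \<open>Z \<times> V_2 inside C^(n+m) = C^n \<times> C^m (first n coordinates for V_1)\<close>
definition prod_set :: "nat \<Rightarrow> nat \<Rightarrow> (nat \<Rightarrow> complex) set \<Rightarrow> (nat \<Rightarrow> complex) set" where
  "prod_set n m Z = {x \<in> cspace (n + m). (\<lambda>i. if i < n then x i else 0) \<in> Z}"

text \<open>A form assigns to each finite set I of variable indices the coefficient of
  dx_I = dx_(i_1) \<and> ... \<and> dx_(i_q), i_1 < ... < i_q.\<close>

type_synonym pform = "nat set \<Rightarrow> mpoly"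

definition forms_on :: "nat set \<Rightarrow> nat \<Rightarrow> pform set" where
  "forms_on V q = {\<omega>. \<forall>I. (\<omega> I \<noteq> 0 \<longrightarrow> I \<subseteq> V \<and> finite I \<and> card I = q) \<and> pvars (\<omega> I) \<subseteq> V}"

definition wsign :: "nat set \<Rightarrow> nat set \<Rightarrow> mpoly" where
  "wsign I J = (- 1) ^ card {(i, j). i \<in> I \<and> j \<in> J \<and> j < i}"

definition wedge :: "pform \<Rightarrow> pform \<Rightarrow> pform" where
  "wedge \<alpha> \<beta> K = (\<Sum>I\<in>Pow K. wsign I (K - I) * \<alpha> I * \<beta> (K - I))"

definition dpoly :: "mpoly \<Rightarrow> pform" where
  "dpoly f I = (if card I = 1 then pdiff (the_elem I) f else 0)"

text \<open>Numerators of logarithmic forms: eta \<in> log_num N Z C q iff eta/h \<in>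
  Omega^q(log Z/C), where h = h_1 \<cdots> h_k and I_C = van_ideal N C.\<close>
definition log_num :: "nat \<Rightarrow> (nat \<Rightarrow> complex) set \<Rightarrow> (nat \<Rightarrow> complex) set \<Rightarrow> nat \<Rightarrow> pform set" where
  "log_num N Z C q = {\<eta> \<in> forms_on {..<N} q.
      (\<forall>f\<in>van_ideal N Z. \<forall>I. f * \<eta> I \<in> van_ideal N C) \<and>
      (\<forall>f\<in>van_ideal N Z. \<forall>K. wedge (dpoly f) \<eta> K \<in> van_ideal N C)}"

text \<open>Numerators of sum_(j=0..q) Omega^j(log Z/C) \<otimes> Omega^(q-j)[V_2] inside
  (1/h) Omega^q[V_1 \<times> V_2]: finite sums of wedge products.\<close>
definition tensor_num :: "nat \<Rightarrow> nat \<Rightarrow> (nat \<Rightarrow> complex) set \<Rightarrow> (nat \<Rightarrow> complex) set \<Rightarrow> nat \<Rightarrow> pform set" where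
  "tensor_num n m Z C q = {\<omega>. \<exists>ps :: (nat \<times> pform \<times> pform) list.
      (\<forall>(j, \<alpha>, \<beta>) \<in> set ps. j \<le> q \<and> \<alpha> \<in> log_num n Z C j \<and> \<beta> \<in> forms_on {n..<n+m} (q - j)) \<and>
      \<omega> = (\<lambda>K. sum_list (map (\<lambda>(j, \<alpha>, \<beta>). wedge \<alpha> \<beta> K) ps))}"

end

theory Submission
  imports Defs
begin

text \<open>Write a polynomial on \<open>C^(n+m) = C^n \<times> C^m\<close> as \<open>\<Sum>_b y^b p_b(x)\<close>.  Since monomials in
  \<open>y\<close> are linearly independent as functions and \<open>y\<close> ranges freely over \<open>Z \<times> C^m\<close>, a polynomial
  vanishes on \<open>Z \<times> C^m\<close> iff every \<open>p_b\<close> vanishes on \<open>Z\<close>; likewise it lies in the ideal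
  generated by \<open>h_1, ..., h_k\<close> iff every \<open>p_b\<close> does.  This transports the complete intersection
  structure from \<open>C_0\<close> to \<open>C_0 \<times> C^m\<close>.  For forms, \<open>dx_K = dx_(K\<inter>x) \<and> dy_(K\<inter>y)\<close>, and the two
  logarithmic conditions along \<open>Z \<times> C^m\<close> can be checked on \<open>y\<close>-coefficients, because
  \<open>\<partial>f/\<partial>y_i\<close> has as \<open>y\<close>-coefficients scalar multiples of \<open>y\<close>-coefficients of \<open>f\<close>, which lie
  in \<open>I_Z\<close>.  Hence a form is logarithmic iff the \<open>x\<close>-component of each of its parts
  \<open>y^b dy_J\<close> is logarithmic along \<open>Z\<close>, which is the asserted decomposition.\<close>

abbreviation lookup :: "('a \<Rightarrow>\<^sub>0 'b::zero) \<Rightarrow> 'a \<Rightarrow> 'b" where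
  "lookup \<equiv> Poly_Mapping.lookup"

abbreviation keys :: "('a \<Rightarrow>\<^sub>0 'b::zero) \<Rightarrow> 'a set" where
  "keys \<equiv> Poly_Mapping.keys"

abbreviation single :: "'a \<Rightarrow> 'b::zero \<Rightarrow> 'a \<Rightarrow>\<^sub>0 'b" where
  "single \<equiv> Poly_Mapping.single"

lemma poly_mapping_sum_single:
  "(p::'a \<Rightarrow>\<^sub>0 'b::comm_monoid_add) = (\<Sum>a\<in>keys p. single a (lookup p a))"
  by (rule poly_mapping_eqI)
    (simp add: lookup_sum lookup_single when_def in_keys_iff sum.delta' split: if_splits)

lemma mpoly_mult_expand:
  "(p::mpoly) * q = (\<Sum>a\<in>keys p. \<Sum>b\<in>keys q. single (a + b) (lookup p a * lookup q b))"
  by (subst poly_mapping_sum_single[of p], subst poly_mapping_sum_single[of q])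
    (simp add: sum_distrib_left sum_distrib_right mult_single, rule sum.swap)

definition mon_val :: "(nat \<Rightarrow>\<^sub>0 nat) \<Rightarrow> (nat \<Rightarrow> complex) \<Rightarrow> complex" where
  "mon_val a x = (\<Prod>i\<in>keys a. x i ^ lookup a i)"

lemma mon_val_superset:
  "finite S \<Longrightarrow> keys a \<subseteq> S \<Longrightarrow> mon_val a x = (\<Prod>i\<in>S. x i ^ lookup a i)"
  unfolding mon_val_def by (rule prod.mono_neutral_left) (auto simp: in_keys_iff)

lemma mon_val_add: "mon_val (a + b) x = mon_val a x * mon_val b x"
proof -
  let ?S = "keys a \<union> keys b"
  have "mon_val (a + b) x = (\<Prod>i\<in>?S. x i ^ lookup (a + b) i)"
    by (rule mon_val_superset) (auto simp: keys_add)
  also have "\<dots> = (\<Prod>i\<in>?S. x i ^ lookup a i) * (\<Prod>i\<in>?S. x i ^ lookup b i)"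
    by (simp add: lookup_add power_add prod.distrib)
  finally show ?thesis
    using mon_val_superset[of ?S a x] mon_val_superset[of ?S b x] by simp
qed

lemma mon_val_single: "mon_val (single v e) x = x v ^ e"
  by (simp add: mon_val_def)

lemma mon_val_cong: "(\<And>i. i \<in> keys a \<Longrightarrow> x i = y i) \<Longrightarrow> mon_val a x = mon_val a y"
  unfolding mon_val_def by (rule prod.cong) auto

lemma peval_eq_sum_mon_val: "peval p x = (\<Sum>a\<in>keys p. lookup p a * mon_val a x)"
  by (simp add: peval_def mon_val_def)

lemma peval_superset:
  "finite S \<Longrightarrow> keys p \<subseteq> S \<Longrightarrow> peval p x = (\<Sum>a\<in>S. lookup p a * mon_val a x)"
  unfolding peval_eq_sum_mon_val by (rule sum.mono_neutral_left) (auto simp: in_keys_iff)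

lemma peval_add: "peval (p + q) x = peval p x + peval q x"
proof -
  let ?S = "keys p \<union> keys q"
  have "peval (p + q) x = (\<Sum>a\<in>?S. lookup (p + q) a * mon_val a x)"
    by (rule peval_superset) (auto simp: keys_add)
  then show ?thesis
    using peval_superset[of ?S p x] peval_superset[of ?S q x]
    by (simp add: lookup_add distrib_right sum.distrib)
qed

lemma peval_zero [simp]: "peval 0 x = 0"
  by (simp add: peval_def)

lemma peval_sum: "peval (\<Sum>i\<in>A. f i) x = (\<Sum>i\<in>A. peval (f i) x)"
  by (induction A rule: infinite_finite_induct) (auto simp: peval_add)

lemma peval_single: "peval (single a c) x = c * mon_val a x"
  by (simp add: peval_eq_sum_mon_val)

lemma peval_mult: "peval (p * q) x = peval p x * peval q x"
proof -
  have "peval (p * q) x = (\<Sum>a\<in>keys p. \<Sum>b\<in>keys q.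
          lookup p a * lookup q b * (mon_val a x * mon_val b x))"
    by (simp add: mpoly_mult_expand peval_sum peval_single mon_val_add)
  also have "\<dots> = peval p x * peval q x"
    unfolding peval_eq_sum_mon_val sum_product by (simp add: mult_ac)
  finally show ?thesis .
qed

lemma peval_one [simp]: "peval 1 x = 1"
  by (metis peval_single single_one mon_val_def keys_zero prod.empty mult_1)

lemma peval_power: "peval (p ^ r) x = peval p x ^ r"
  by (induction r) (auto simp: peval_mult)

lemma peval_cong: "(\<And>i. i \<in> pvars p \<Longrightarrow> x i = y i) \<Longrightarrow> peval p x = peval p y"
  unfolding peval_eq_sum_mon_val pvars_def
  by (intro sum.cong refl arg_cong[where f="(*) _"] mon_val_cong) auto

lemma pvars_add: "pvars (p + q) \<subseteq> pvars p \<union> pvars q"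
  unfolding pvars_def using keys_add[of p q] by auto

lemma pvars_zero [simp]: "pvars 0 = {}"
  by (simp add: pvars_def)

lemma pvars_sum: "pvars (\<Sum>i\<in>A. f i) \<subseteq> (\<Union>i\<in>A. pvars (f i))"
  by (induction A rule: infinite_finite_induct) (use pvars_add in auto)

lemma pvars_single: "pvars (single a c) \<subseteq> keys a"
  by (simp add: pvars_def)

lemma pvars_mult: "pvars (p * q) \<subseteq> pvars p \<union> pvars q"
proof
  fix i assume "i \<in> pvars (p * q)"
  then obtain c where c: "c \<in> keys (p * q)" "i \<in> keys c"
    unfolding pvars_def by auto
  then obtain a b where "c = a + b" "a \<in> keys p" "b \<in> keys q"
    using keys_mult by blast
  then show "i \<in> pvars p \<union> pvars q"
    using c keys_add[of a b] unfolding pvars_def by auto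
qed

lemma pvars_power: "pvars (p ^ r) \<subseteq> pvars p"
proof (induction r)
  case 0
  show ?case using pvars_single[of 0 "1::complex"] by simp
qed (use pvars_mult in auto)

lemma polys_zero [simp]: "0 \<in> polys N"
  by (simp add: polys_def)

lemma polys_add: "p \<in> polys N \<Longrightarrow> q \<in> polys N \<Longrightarrow> p + q \<in> polys N"
  unfolding polys_def using pvars_add by blast

lemma polys_mult: "p \<in> polys N \<Longrightarrow> q \<in> polys N \<Longrightarrow> p * q \<in> polys N"
  unfolding polys_def using pvars_mult by blast

lemma polys_sum: "(\<And>i. i \<in> A \<Longrightarrow> f i \<in> polys N) \<Longrightarrow> (\<Sum>i\<in>A. f i) \<in> polys N"
  unfolding polys_def using pvars_sum by blast

lemma polys_power: "p \<in> polys N \<Longrightarrow> p ^ r \<in> polys N"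
  unfolding polys_def using pvars_power by blast

lemma polys_mono: "N \<le> M \<Longrightarrow> p \<in> polys N \<Longrightarrow> p \<in> polys M"
  unfolding polys_def by auto

lemma polys_single: "keys a \<subseteq> {..<N} \<Longrightarrow> single a c \<in> polys N"
  unfolding polys_def using pvars_single by blast

lemma polys_of_nat: "of_nat k \<in> polys N"
  by (metis single_of_nat polys_single empty_subsetI keys_zero)

lemma wsign_polys: "wsign I J \<in> polys N"
proof -
  have "(- 1 :: mpoly) = single 0 (- 1)"
    by (simp add: single_uminus)
  then have "(- 1 :: mpoly) \<in> polys N"
    by (simp add: polys_single)
  then show ?thesis
    unfolding wsign_def by (rule polys_power)
qed

lemma peval_restrict:
  "p \<in> polys n \<Longrightarrow> peval p x = peval p (\<lambda>i. if i < n then x i else 0)"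
  unfolding polys_def by (intro peval_cong) auto

lemma lookup_pdiff: "lookup (pdiff i p) c = of_nat (lookup c i + 1) * lookup p (c + single i 1)"
proof -
  have minus_eq: "a - single i 1 = c \<longleftrightarrow> a = c + single i 1" if "lookup a i \<noteq> 0" for a
  proof
    assume "a - single i 1 = c"
    then have "lookup c j = lookup a j - (if i = j then 1 else 0)" for j
      by (auto simp: lookup_minus lookup_single when_def)
    then show "a = c + single i 1"
      using that by (auto intro!: poly_mapping_eqI simp: lookup_add lookup_single)
  qed (auto intro!: poly_mapping_eqI simp: lookup_add lookup_minus lookup_single when_def)
  have "lookup (pdiff i p) c = (\<Sum>a\<in>keys p. lookup p a * of_nat (lookup a i) when a - single i 1 = c)"
    by (simp add: pdiff_def lookup_sum lookup_single)
  also have "\<dots> = (\<Sum>a\<in>keys p. if a = c + single i 1 then lookup p a * of_nat (lookup a i) else 0)"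
  proof (intro sum.cong refl)
    fix a
    show "(lookup p a * of_nat (lookup a i) when a - single i 1 = c)
        = (if a = c + single i 1 then lookup p a * of_nat (lookup a i) else 0)"
    proof (cases "lookup a i = 0")
      case True
      then have "a \<noteq> c + single i 1" by (auto simp: lookup_add)
      then show ?thesis using True by (simp add: when_def)
    qed (use minus_eq[of a] in \<open>auto simp: when_def\<close>)
  qed
  also have "\<dots> = of_nat (lookup c i + 1) * lookup p (c + single i 1)"
    by (auto simp: sum.delta in_keys_iff lookup_add)
  finally show ?thesis .
qed

lemma keys_plus_single: "keys (c + single i (1::nat)) = insert i (keys c)"
  by (auto simp: in_keys_iff lookup_add lookup_single when_def split: if_splits)

lemma pdiff_eq_0_if_notin_pvars: "i \<notin> pvars f \<Longrightarrow> pdiff i f = 0"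
proof (rule poly_mapping_eqI, rule ccontr)
  fix c assume i: "i \<notin> pvars f" and "lookup (pdiff i f) c \<noteq> lookup 0 c"
  then have "c + single i 1 \<in> keys f"
    by (auto simp: lookup_pdiff in_keys_iff)
  moreover have "i \<in> keys (c + single i 1)"
    by (simp add: in_keys_iff lookup_add)
  ultimately show False
    using i unfolding pvars_def by auto
qed

lemma pvars_pdiff: "pvars (pdiff i f) \<subseteq> pvars f"
proof
  fix j assume "j \<in> pvars (pdiff i f)"
  then obtain c where c: "c \<in> keys (pdiff i f)" "j \<in> keys c"
    unfolding pvars_def by auto
  then have "c + single i 1 \<in> keys f"
    by (auto simp: lookup_pdiff in_keys_iff)
  then show "j \<in> pvars f"
    using c keys_plus_single[of c i] unfolding pvars_def by auto
qed

lemma polys_pdiff: "f \<in> polys N \<Longrightarrow> pdiff i f \<in> polys N"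
  unfolding polys_def using pvars_pdiff by blast

section \<open>Coefficients with respect to the variables of the second factor\<close>

text \<open>For the splitting \<open>C^(n+m) = C^n \<times> C^m\<close> an exponent vector \<open>a\<close> splits as
  \<open>xpart n a + ypart n a\<close>, and \<open>ycoeff n b p\<close> is the coefficient of \<open>y^b\<close> when \<open>p\<close> is
  viewed as a polynomial in \<open>y = (x_n, x_(n+1), ...)\<close> over \<open>C[x_0, ..., x_(n-1)]\<close>.\<close>

definition xpart :: "nat \<Rightarrow> (nat \<Rightarrow>\<^sub>0 nat) \<Rightarrow> (nat \<Rightarrow>\<^sub>0 nat)" where
  "xpart n a = Abs_poly_mapping (\<lambda>i. if i < n then lookup a i else 0)"

definition ypart :: "nat \<Rightarrow> (nat \<Rightarrow>\<^sub>0 nat) \<Rightarrow> (nat \<Rightarrow>\<^sub>0 nat)" where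
  "ypart n a = Abs_poly_mapping (\<lambda>i. if i < n then 0 else lookup a i)"

lemma lookup_xpart: "lookup (xpart n a) i = (if i < n then lookup a i else 0)"
proof -
  have "finite {i. (if i < n then lookup a i else 0) \<noteq> 0}"
    by (rule finite_subset[of _ "keys a"]) (auto simp: in_keys_iff)
  then show ?thesis unfolding xpart_def by simp
qed

lemma lookup_ypart: "lookup (ypart n a) i = (if i < n then 0 else lookup a i)"
proof -
  have "finite {i. (if i < n then 0 else lookup a i) \<noteq> 0}"
    by (rule finite_subset[of _ "keys a"]) (auto simp: in_keys_iff)
  then show ?thesis unfolding ypart_def by simp
qed

lemma xpart_plus_ypart: "xpart n a + ypart n a = a"
  by (rule poly_mapping_eqI) (simp add: lookup_add lookup_xpart lookup_ypart)

lemma keys_xpart: "keys (xpart n a) \<subseteq> keys a \<inter> {..<n}"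
  by (auto simp: in_keys_iff lookup_xpart split: if_splits)

lemma keys_ypart: "keys (ypart n a) \<subseteq> keys a - {..<n}"
  by (auto simp: in_keys_iff lookup_ypart split: if_splits)

lemma split_exponent_iff:
  assumes "keys d \<subseteq> {..<n}" "\<forall>i\<in>keys b. n \<le> i"
  shows "a = d + b \<longleftrightarrow> ypart n a = b \<and> xpart n a = d"
proof
  assume "a = d + b"
  moreover have "lookup d i = 0" if "n \<le> i" for i
    using assms(1) that by (metis in_keys_iff lessThan_iff not_le subsetD)
  moreover have "lookup b j = 0" if "j < n" for j
    using assms(2) that by (metis in_keys_iff not_le)
  ultimately show "ypart n a = b \<and> xpart n a = d"
    by (auto intro!: poly_mapping_eqI simp: lookup_add lookup_xpart lookup_ypart)
qed (use xpart_plus_ypart[of n a] in auto)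

definition ycoeff :: "nat \<Rightarrow> (nat \<Rightarrow>\<^sub>0 nat) \<Rightarrow> mpoly \<Rightarrow> mpoly" where
  "ycoeff n b p = Abs_poly_mapping
     (\<lambda>c. if keys c \<subseteq> {..<n} \<and> (\<forall>i\<in>keys b. n \<le> i) then lookup p (c + b) else 0)"

lemma lookup_ycoeff:
  "lookup (ycoeff n b p) c =
     (if keys c \<subseteq> {..<n} \<and> (\<forall>i\<in>keys b. n \<le> i) then lookup p (c + b) else 0)"
proof -
  let ?f = "\<lambda>c. if keys c \<subseteq> {..<n} \<and> (\<forall>i\<in>keys b. n \<le> i) then lookup p (c + b) else 0"
  have "{c. ?f c \<noteq> 0} \<subseteq> (\<lambda>a. a - b) ` keys p"
  proof
    fix c assume "c \<in> {c. ?f c \<noteq> 0}"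
    then have "c + b \<in> keys p" by (auto simp: in_keys_iff split: if_splits)
    then show "c \<in> (\<lambda>a. a - b) ` keys p" by (intro image_eqI[of _ _ "c + b"]) auto
  qed
  then have "finite {c. ?f c \<noteq> 0}"
    by (rule finite_subset) simp
  then show ?thesis unfolding ycoeff_def by simp
qed

lemma ycoeff_add: "ycoeff n b (p + q) = ycoeff n b p + ycoeff n b q"
  by (rule poly_mapping_eqI) (simp add: lookup_ycoeff lookup_add)

lemma ycoeff_zero [simp]: "ycoeff n b 0 = 0"
  by (rule poly_mapping_eqI) (simp add: lookup_ycoeff)

lemma ycoeff_sum: "ycoeff n b (\<Sum>i\<in>A. f i) = (\<Sum>i\<in>A. ycoeff n b (f i))"
  by (induction A rule: infinite_finite_induct) (auto simp: ycoeff_add)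

lemma ycoeff_single:
  "ycoeff n b (single a c) = (if ypart n a = b then single (xpart n a) c else 0)"
proof (rule poly_mapping_eqI)
  fix d
  show "lookup (ycoeff n b (single a c)) d
      = lookup (if ypart n a = b then single (xpart n a) c else 0) d"
  proof (cases "keys d \<subseteq> {..<n} \<and> (\<forall>i\<in>keys b. n \<le> i)")
    case True
    then show ?thesis
      using split_exponent_iff[of d n b a] by (auto simp: lookup_ycoeff lookup_single when_def)
  next
    case False
    then have "\<not> (ypart n a = b \<and> xpart n a = d)"
      using keys_xpart[of n a] keys_ypart[of n a] by auto
    then show ?thesis
      using False by (auto simp: lookup_ycoeff lookup_single when_def)
  qed
qed

lemma ycoeff_mult_left:
  assumes "p \<in> polys n"
  shows "ycoeff n b (p * q) = p * ycoeff n b q"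
proof -
  have shift: "ypart n (a + a') = ypart n a'" "xpart n (a + a') = a + xpart n a'" if "a \<in> keys p" for a a'
  proof -
    have "keys a \<subseteq> {..<n}"
      using assms that unfolding polys_def pvars_def by auto
    then show "ypart n (a + a') = ypart n a'" "xpart n (a + a') = a + xpart n a'"
      by (auto intro!: poly_mapping_eqI simp: lookup_add lookup_xpart lookup_ypart in_keys_iff)
  qed
  have "ycoeff n b (p * q)
      = (\<Sum>a\<in>keys p. \<Sum>a'\<in>keys q. single a (lookup p a) * ycoeff n b (single a' (lookup q a')))"
    by (simp add: mpoly_mult_expand ycoeff_sum, intro sum.cong refl)
      (simp add: ycoeff_single shift mult_single)
  also have "\<dots> = (\<Sum>a\<in>keys p. single a (lookup p a)) * ycoeff n b (\<Sum>a'\<in>keys q. single a' (lookup q a'))"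
    by (simp add: ycoeff_sum sum_distrib_left sum_distrib_right) (rule sum.swap)
  finally show ?thesis
    by (simp flip: poly_mapping_sum_single)
qed

lemma ycoeff_polys: "ycoeff n b p \<in> polys n"
proof -
  have "keys c \<subseteq> {..<n}" if "c \<in> keys (ycoeff n b p)" for c
    using that by (metis in_keys_iff lookup_ycoeff)
  then show ?thesis
    unfolding polys_def pvars_def by blast
qed

lemma ypart_keys_subset:
  assumes "p \<in> polys N" "b \<in> ypart n ` keys p"
  shows "keys b \<subseteq> {n..<N}"
  using assms keys_ypart unfolding polys_def pvars_def by fastforce

lemma ycoeff_decomp:
  assumes "finite B" "ypart n ` keys p \<subseteq> B"
  shows "p = (\<Sum>b\<in>B. single b 1 * ycoeff n b p)"
proof -
  have "(\<Sum>b\<in>B. single b 1 * ycoeff n b p)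
      = (\<Sum>a\<in>keys p. \<Sum>b\<in>B. single b 1 * ycoeff n b (single a (lookup p a)))"
    by (subst (1) poly_mapping_sum_single[of p])
      (simp add: ycoeff_sum sum_distrib_left, rule sum.swap)
  also have "\<dots> = (\<Sum>a\<in>keys p. single a (lookup p a))"
  proof (intro sum.cong refl)
    fix a assume "a \<in> keys p"
    then show "(\<Sum>b\<in>B. single b 1 * ycoeff n b (single a (lookup p a))) = single a (lookup p a)"
      using assms
      by (simp add: ycoeff_single mult_single if_distrib[of "\<lambda>x. _ * x"] sum.delta
          add.commute xpart_plus_ypart image_subset_iff cong: if_cong)
  qed
  finally show ?thesis
    by (simp flip: poly_mapping_sum_single)
qed

lemma ycoeff_eq_0_if_notin: "b \<notin> ypart n ` keys p \<Longrightarrow> ycoeff n b p = 0"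
proof (rule poly_mapping_eqI, rule ccontr)
  fix c assume b: "b \<notin> ypart n ` keys p" and "lookup (ycoeff n b p) c \<noteq> lookup 0 c"
  then have c: "keys c \<subseteq> {..<n}" "\<forall>i\<in>keys b. n \<le> i" "c + b \<in> keys p"
    by (auto simp: lookup_ycoeff in_keys_iff split: if_splits)
  then have "ypart n (c + b) = b"
    using split_exponent_iff by blast
  then show False using b c by (metis image_eqI)
qed

lemma ycoeff_one: "ycoeff n 0 1 = 1"
proof -
  have "xpart n 0 = 0" "ypart n 0 = 0"
    by (auto intro!: poly_mapping_eqI simp: lookup_xpart lookup_ypart)
  then show ?thesis
    using ycoeff_single[of n 0 0 1] by (simp add: single_one)
qed

lemma ycoeff_pdiff_x:
  assumes "i < n"
  shows "ycoeff n b (pdiff i f) = pdiff i (ycoeff n b f)"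
proof (rule poly_mapping_eqI)
  fix c :: "nat \<Rightarrow>\<^sub>0 nat"
  have "keys (c + single i 1) \<subseteq> {..<n} \<longleftrightarrow> keys c \<subseteq> {..<n}"
    unfolding keys_plus_single using assms by simp
  moreover have "\<forall>j\<in>keys b. n \<le> j \<Longrightarrow> lookup b i = 0"
    using assms by (metis in_keys_iff not_le)
  ultimately show "lookup (ycoeff n b (pdiff i f)) c = lookup (pdiff i (ycoeff n b f)) c"
    by (auto simp: lookup_ycoeff lookup_pdiff lookup_add ac_simps)
qed

lemma ycoeff_pdiff_y:
  assumes "n \<le> i"
  shows "ycoeff n b (pdiff i f) = of_nat (lookup b i + 1) * ycoeff n (b + single i 1) f"
proof (rule poly_mapping_eqI)
  fix c :: "nat \<Rightarrow>\<^sub>0 nat"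
  have "keys c \<subseteq> {..<n} \<Longrightarrow> lookup c i = 0"
    using assms by (metis in_keys_iff lessThan_iff not_le subsetD)
  moreover have "(\<forall>j\<in>keys (b + single i 1). n \<le> j) \<longleftrightarrow> (\<forall>j\<in>keys b. n \<le> j)"
    unfolding keys_plus_single using assms by simp
  moreover have of_nat_mult: "lookup (of_nat k * (P::mpoly)) c = of_nat k * lookup P c" for k P
    by (simp flip: single_of_nat mult_map_scale_conv_mult add: map.rep_eq when_def)
  ultimately show "lookup (ycoeff n b (pdiff i f)) c
      = lookup (of_nat (lookup b i + 1) * ycoeff n (b + single i 1) f) c"
    unfolding of_nat_mult lookup_ycoeff lookup_pdiff by (auto simp: lookup_add ac_simps)
qed

section \<open>Ideals of a product with an affine space\<close>

lemma sum_mon_val_eq_0_degreewise: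
  assumes "finite B" and vanish: "\<forall>y. (\<Sum>b\<in>B. c b * mon_val b y) = 0"
  shows "(\<Sum>b\<in>{b\<in>B. lookup b v = e}. c b * mon_val (Poly_Mapping.update v 0 b) y) = 0"
proof -
  let ?clr = "Poly_Mapping.update v 0"
  let ?a = "\<lambda>e. (\<Sum>b\<in>{b\<in>B. lookup b v = e}. c b * mon_val (?clr b) y)"
  define D where "D = Max (insert 0 ((\<lambda>b. lookup b v) ` B))"
  have le_D: "b \<in> B \<Longrightarrow> lookup b v \<le> D" for b
    unfolding D_def using assms(1) by (intro Max_ge) auto
  have mon_val_split: "mon_val b (y(v := t)) = mon_val (?clr b) y * t ^ lookup b v" for b t
  proof -
    have "b = ?clr b + single v (lookup b v)"
      by (rule poly_mapping_eqI) (simp add: lookup_update lookup_add lookup_single when_def)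
    then have "mon_val b (y(v := t)) = mon_val (?clr b) (y(v := t)) * t ^ lookup b v"
      by (metis mon_val_add mon_val_single fun_upd_same)
    also have "mon_val (?clr b) (y(v := t)) = mon_val (?clr b) y"
      by (rule mon_val_cong) (simp add: keys_update)
    finally show ?thesis .
  qed
  have "(\<Sum>e'\<le>D. ?a e' * t ^ e') = 0" for t
  proof -
    have "(\<Sum>e'\<le>D. ?a e' * t ^ e')
        = (\<Sum>e'\<le>D. \<Sum>b\<in>{b\<in>B. lookup b v = e'}. c b * mon_val (?clr b) y * t ^ lookup b v)"
      by (intro sum.cong refl) (auto simp: sum_distrib_right)
    also have "\<dots> = (\<Sum>b\<in>B. c b * mon_val (?clr b) y * t ^ lookup b v)"
      by (rule sum.group) (use assms(1) le_D in auto)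
    also have "\<dots> = (\<Sum>b\<in>B. c b * mon_val b (y(v := t)))"
      by (simp add: mon_val_split mult.assoc)
    finally show ?thesis
      using vanish by simp
  qed
  then have "\<forall>e'\<le>D. ?a e' = 0"
    using polyfun_eq_0[of ?a D] by blast
  moreover have "?a e = 0" if "e > D"
    using le_D that by (intro sum.neutral) (auto dest: leD)
  ultimately show ?thesis
    by (cases "e \<le> D") auto
qed

text \<open>Induction on the set of variables: split off one variable and use that a univariate
  polynomial function vanishing everywhere is zero.\<close>

lemma mon_val_linear_independent:
  assumes "finite V"
  shows "finite B \<Longrightarrow> \<forall>b\<in>B. keys b \<subseteq> V \<Longrightarrow> \<forall>y. (\<Sum>b\<in>B. c b * mon_val b y) = 0
    \<Longrightarrow> \<forall>b\<in>B. c b = 0"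
  using assms
proof (induction V arbitrary: B c rule: finite_induct)
  case empty
  then have "B \<subseteq> {0}" by auto
  then show ?case
    using empty(3) by (cases "B = {}") (auto simp: subset_singleton_iff mon_val_def)
next
  case (insert v V)
  let ?clr = "Poly_Mapping.update v 0"
  show ?case
  proof
    fix b0 assume b0: "b0 \<in> B"
    define Be where "Be = {b\<in>B. lookup b v = lookup b0 v}"
    have inj: "inj_on ?clr Be"
    proof
      fix b b' assume "b \<in> Be" "b' \<in> Be" "?clr b = ?clr b'"
      then show "b = b'"
        unfolding Be_def by (metis (mono_tags) mem_Collect_eq lookup_update poly_mapping_eqI)
    qed
    define c' where "c' b' = c (inv_into Be ?clr b')" for b'
    have "\<forall>b'\<in>?clr ` Be. c' b' = 0"
    proof (rule insert.IH)
      show "finite (?clr ` Be)" using insert.prems(1) unfolding Be_def by auto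
      show "\<forall>b\<in>?clr ` Be. keys b \<subseteq> V"
        using insert.prems(2) unfolding Be_def by (auto simp: keys_update)
      show "\<forall>y. (\<Sum>b\<in>?clr ` Be. c' b * mon_val b y) = 0"
      proof
        fix y
        have "(\<Sum>b\<in>?clr ` Be. c' b * mon_val b y) = (\<Sum>b\<in>Be. c b * mon_val (?clr b) y)"
          by (simp add: sum.reindex[OF inj] c'_def inv_into_f_f[OF inj])
        also have "\<dots> = 0"
          unfolding Be_def by (rule sum_mon_val_eq_0_degreewise) (use insert.prems in auto)
        finally show "(\<Sum>b\<in>?clr ` Be. c' b * mon_val b y) = 0" .
      qed
    qed
    moreover have "b0 \<in> Be" using b0 unfolding Be_def by simp
    ultimately show "c b0 = 0"
      by (auto simp: c'_def inv_into_f_f[OF inj])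
  qed
qed

lemma gen_ideal_zero: "0 \<in> gen_ideal N hs i"
  unfolding gen_ideal_def by (auto intro!: exI[of _ "\<lambda>_. 0"])

lemma gen_ideal_add:
  assumes "p \<in> gen_ideal N hs i" "q \<in> gen_ideal N hs i"
  shows "p + q \<in> gen_ideal N hs i"
proof -
  obtain g g' where "\<forall>j<i. g j \<in> polys N" "p = (\<Sum>j<i. g j * hs j)"
    and "\<forall>j<i. g' j \<in> polys N" "q = (\<Sum>j<i. g' j * hs j)"
    using assms unfolding gen_ideal_def by blast
  then show ?thesis
    unfolding gen_ideal_def
    by (intro CollectI exI[of _ "\<lambda>j. g j + g' j"]) (auto simp: polys_add distrib_right sum.distrib)
qed

lemma gen_ideal_mult:
  assumes "r \<in> polys N" "p \<in> gen_ideal N hs i"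
  shows "r * p \<in> gen_ideal N hs i"
proof -
  obtain g where "\<forall>j<i. g j \<in> polys N" "p = (\<Sum>j<i. g j * hs j)"
    using assms(2) unfolding gen_ideal_def by blast
  then show ?thesis
    unfolding gen_ideal_def using assms(1)
    by (intro CollectI exI[of _ "\<lambda>j. r * g j"]) (auto simp: polys_mult sum_distrib_left mult.assoc)
qed

lemma gen_ideal_sum:
  "(\<And>a. a \<in> A \<Longrightarrow> f a \<in> gen_ideal N hs i) \<Longrightarrow> (\<Sum>a\<in>A. f a) \<in> gen_ideal N hs i"
  by (induction A rule: infinite_finite_induct) (auto simp: gen_ideal_zero gen_ideal_add)

lemma gen_ideal_subset_polys: "\<forall>j<i. hs j \<in> polys N \<Longrightarrow> gen_ideal N hs i \<subseteq> polys N"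
  unfolding gen_ideal_def by (auto intro!: polys_sum polys_mult)

lemma gen_ideal_mono: "N \<le> M \<Longrightarrow> gen_ideal N hs i \<subseteq> gen_ideal M hs i"
  unfolding gen_ideal_def using polys_mono by blast

lemma gen_ideal_prod_iff:
  assumes hs: "\<forall>j<i. hs j \<in> polys n" and p: "p \<in> polys (n + m)"
  shows "p \<in> gen_ideal (n + m) hs i \<longleftrightarrow> (\<forall>b. ycoeff n b p \<in> gen_ideal n hs i)"
proof
  assume "p \<in> gen_ideal (n + m) hs i"
  then obtain g where g: "\<forall>j<i. g j \<in> polys (n + m)" "p = (\<Sum>j<i. g j * hs j)"
    unfolding gen_ideal_def by blast
  have "ycoeff n b p = (\<Sum>j<i. ycoeff n b (g j) * hs j)" for b
    unfolding g(2) ycoeff_sum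
    by (intro sum.cong refl) (metis hs lessThan_iff mult.commute ycoeff_mult_left)
  then show "\<forall>b. ycoeff n b p \<in> gen_ideal n hs i"
    unfolding gen_ideal_def using ycoeff_polys
    by (intro allI CollectI exI[of _ "\<lambda>j. ycoeff n _ (g j)"]) auto
next
  assume coeffs: "\<forall>b. ycoeff n b p \<in> gen_ideal n hs i"
  have "p = (\<Sum>b\<in>ypart n ` keys p. single b 1 * ycoeff n b p)"
    by (rule ycoeff_decomp) auto
  also have "\<dots> \<in> gen_ideal (n + m) hs i"
  proof (rule gen_ideal_sum)
    fix b assume "b \<in> ypart n ` keys p"
    then have "keys b \<subseteq> {n..<n + m}"
      using ypart_keys_subset[OF p] by blast
    then have "single b 1 \<in> polys (n + m)"
      by (intro polys_single) auto
    moreover have "ycoeff n b p \<in> gen_ideal (n + m) hs i"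
      using coeffs gen_ideal_mono[of n "n + m"] by auto
    ultimately show "single b 1 * ycoeff n b p \<in> gen_ideal (n + m) hs i"
      by (rule gen_ideal_mult)
  qed
  finally show "p \<in> gen_ideal (n + m) hs i" .
qed

abbreviation xproj :: "nat \<Rightarrow> (nat \<Rightarrow> complex) \<Rightarrow> (nat \<Rightarrow> complex)" where
  "xproj n x \<equiv> (\<lambda>i. if i < n then x i else 0)"

lemma peval_ycoeff_decomp:
  assumes "p \<in> polys (n + m)"
  shows "peval p z = (\<Sum>b\<in>ypart n ` keys p. mon_val b z * peval (ycoeff n b p) (xproj n z))"
proof -
  have "peval p z = peval (\<Sum>b\<in>ypart n ` keys p. single b 1 * ycoeff n b p) z"
    using ycoeff_decomp[of "ypart n ` keys p" n p] by simp
  then show ?thesis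
    by (simp add: peval_sum peval_mult peval_single flip: peval_restrict[OF ycoeff_polys])
qed

lemma ycoeff_vanishes_if_vanishes_on_prod_set:
  assumes p: "p \<in> polys (n + m)" and vanish: "\<forall>x\<in>prod_set n m C. peval p x = 0"
    and x0: "x0 \<in> C" "x0 \<in> cspace n"
  shows "peval (ycoeff n b p) x0 = 0"
proof (cases "b \<in> ypart n ` keys p")
  case False
  then show ?thesis by (simp add: ycoeff_eq_0_if_notin)
next
  case True
  let ?B = "ypart n ` keys p"
  have "\<forall>b\<in>?B. peval (ycoeff n b p) x0 = 0"
  proof (rule mon_val_linear_independent[of "{n..<n + m}"])
    show "\<forall>b\<in>?B. keys b \<subseteq> {n..<n + m}"
      using ypart_keys_subset[OF p] by blast
    show "\<forall>y. (\<Sum>b\<in>?B. peval (ycoeff n b p) x0 * mon_val b y) = 0"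
    proof
      fix y
      define z where "z = (\<lambda>i. if i < n then x0 i else if i < n + m then y i else 0)"
      have xproj_z: "xproj n z = x0"
        using x0(2) unfolding z_def cspace_def by (auto simp: fun_eq_iff)
      have "z \<in> prod_set n m C"
        using x0(1) xproj_z unfolding prod_set_def cspace_def z_def by auto
      then have "0 = (\<Sum>b\<in>?B. mon_val b z * peval (ycoeff n b p) x0)"
        using vanish peval_ycoeff_decomp[OF p, of z] xproj_z by simp
      also have "\<dots> = (\<Sum>b\<in>?B. peval (ycoeff n b p) x0 * mon_val b y)"
      proof (intro sum.cong refl)
        fix b assume "b \<in> ?B"
        then have "keys b \<subseteq> {n..<n + m}"
          using ypart_keys_subset[OF p] by blast
        then have "mon_val b z = mon_val b y"
          by (intro mon_val_cong) (auto simp: z_def)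
        then show "mon_val b z * peval (ycoeff n b p) x0 = peval (ycoeff n b p) x0 * mon_val b y"
          by simp
      qed
      finally show "(\<Sum>b\<in>?B. peval (ycoeff n b p) x0 * mon_val b y) = 0" by simp
    qed
  qed auto
  then show ?thesis using True by blast
qed

lemma ycoeff_in_van_ideal:
  assumes "C \<subseteq> cspace n" "p \<in> van_ideal (n + m) (prod_set n m C)"
  shows "ycoeff n b p \<in> van_ideal n C"
proof -
  have "peval (ycoeff n b p) x0 = 0" if "x0 \<in> C" for x0
    using assms that unfolding van_ideal_def
    by (intro ycoeff_vanishes_if_vanishes_on_prod_set) auto
  then show ?thesis
    unfolding van_ideal_def using ycoeff_polys by blast
qed

lemma in_van_ideal_prod_set_if_ycoeffs:
  assumes "p \<in> polys (n + m)" "\<forall>b. ycoeff n b p \<in> van_ideal n C"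
  shows "p \<in> van_ideal (n + m) (prod_set n m C)"
proof -
  have "peval p x = 0" if "x \<in> prod_set n m C" for x
    using assms that unfolding van_ideal_def prod_set_def by (simp add: peval_ycoeff_decomp)
  then show ?thesis
    using assms(1) unfolding van_ideal_def by blast
qed

lemma van_ideal_subset_prod_set: "van_ideal n Z \<subseteq> van_ideal (n + m) (prod_set n m Z)"
proof
  fix f assume f: "f \<in> van_ideal n Z"
  then have "f \<in> polys n" "\<forall>x\<in>Z. peval f x = 0"
    unfolding van_ideal_def by auto
  then have "peval f x = 0" if "x \<in> prod_set n m Z" for x
    using that peval_restrict[of f n x] unfolding prod_set_def by auto
  then show "f \<in> van_ideal (n + m) (prod_set n m Z)"
    using \<open>f \<in> polys n\<close> polys_mono[of n "n + m"] unfolding van_ideal_def by auto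
qed

lemma van_ideal_prod_set_eq_gen_ideal:
  assumes "C \<subseteq> cspace n" "\<forall>j<k. hs j \<in> polys n" "van_ideal n C = gen_ideal n hs k"
  shows "van_ideal (n + m) (prod_set n m C) = gen_ideal (n + m) hs k"
proof -
  have "gen_ideal (n + m) hs k \<subseteq> polys (n + m)"
    using assms(2) polys_mono[of n "n + m"] by (intro gen_ideal_subset_polys) auto
  moreover have "van_ideal (n + m) (prod_set n m C) \<subseteq> polys (n + m)"
    unfolding van_ideal_def by auto
  ultimately show ?thesis
    using ycoeff_in_van_ideal[OF assms(1)] in_van_ideal_prod_set_if_ycoeffs
      gen_ideal_prod_iff[OF assms(2)] assms(3) by blast
qed

section \<open>Products of subspace arrangements with an affine space\<close>

lemma lin_subspace_prod_set:
  assumes "lin_subspace n L"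
  shows "lin_subspace (n + m) (prod_set n m L)"
proof -
  have "xproj n (\<lambda>_. 0) = (\<lambda>_. 0)"
    "xproj n (\<lambda>i. x i + y i) = (\<lambda>i. xproj n x i + xproj n y i)"
    "xproj n (\<lambda>i. c * x i) = (\<lambda>i. c * xproj n x i)" for x y :: "nat \<Rightarrow> complex" and c
    by auto
  then show ?thesis
    using assms unfolding lin_subspace_def prod_set_def cspace_def by auto
qed

text \<open>A basis of \<open>L \<times> C^m\<close>: a basis \<open>v_0, ..., v_(d-1)\<close> of \<open>L\<close> followed by the unit vectors
  \<open>e_n, ..., e_(n+m-1)\<close>.\<close>

lemma sum_extended_basis:
  fixes v :: "nat \<Rightarrow> nat \<Rightarrow> complex" and c :: "nat \<Rightarrow> complex" and n d m j :: nat
  defines "w \<equiv> \<lambda>i. if i < d then v i else (\<lambda>j. if j = n + (i - d) then 1 else 0)"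
  shows "(\<Sum>i<d + m. c i * w i j)
    = (\<Sum>i<d. c i * v i j) + (if n \<le> j \<and> j < n + m then c (d + (j - n)) else 0)"
proof -
  have "(\<Sum>i<d + m. c i * w i j)
      = (\<Sum>i<d. c i * v i j) + (\<Sum>t<m. c (d + t) * (if j = n + t then 1 else 0))"
    by (induction m) (auto simp: w_def)
  also have "(\<Sum>t<m. c (d + t) * (if j = n + t then 1 else 0))
      = (if n \<le> j \<and> j < n + m then c (d + (j - n)) else 0)"
    by (induction m) auto
  finally show ?thesis .
qed

lemma has_dim_prod_set:
  assumes L: "lin_subspace n L" and dim: "has_dim L d"
  shows "has_dim (prod_set n m L) (d + m)"
proof -
  obtain v where v_in: "\<forall>i<d. v i \<in> L"
    and v_indep: "\<forall>c. (\<forall>j. (\<Sum>i<d. c i * v i j) = 0) \<longrightarrow> (\<forall>i<d. c i = 0)"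
    and v_span: "L = {x. \<exists>c. x = (\<lambda>j. \<Sum>i<d. c i * v i j)}"
    using dim unfolding has_dim_def by blast
  have L_cspace: "L \<subseteq> cspace n" and L_zero: "(\<lambda>_. 0) \<in> L"
    using L unfolding lin_subspace_def by auto
  have v_high: "(\<Sum>i<d. c i * v i j) = 0" if "n \<le> j" for c j
    using v_in L_cspace that unfolding cspace_def by (auto intro!: sum.neutral)
  define w where "w i = (if i < d then v i else (\<lambda>j. if j = n + (i - d) then 1 else 0))" for i
  have w_sum: "(\<Sum>i<d + m. c i * w i j)
      = (\<Sum>i<d. c i * v i j) + (if n \<le> j \<and> j < n + m then c (d + (j - n)) else 0)" for c j
    using sum_extended_basis[where v=v and c=c and n=n and d=d and m=m and j=j] unfolding w_def by simp
  show ?thesis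
    unfolding has_dim_def
  proof (intro exI[of _ w] conjI allI impI)
    fix i assume i: "i < d + m"
    have "xproj n (w i) = (if i < d then v i else (\<lambda>_. 0))"
      using v_in L_cspace unfolding w_def cspace_def by (auto simp: fun_eq_iff)
    then have "xproj n (w i) \<in> L"
      using v_in L_zero i by simp
    moreover have "w i \<in> cspace (n + m)"
      using i v_in L_cspace unfolding w_def cspace_def by auto
    ultimately show "w i \<in> prod_set n m L"
      unfolding prod_set_def by simp
  next
    fix c :: "nat \<Rightarrow> complex" and i
    assume c: "\<forall>j. (\<Sum>i<d + m. c i * w i j) = 0" and i: "i < d + m"
    have c_high: "c (d + t) = 0" if "t < m" for t
      using c[rule_format, of "n + t"] that by (simp add: w_sum v_high)
    have "(\<Sum>i<d. c i * v i j) = 0" for j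
      using c[rule_format, of j] c_high[of "j - n"] by (simp add: w_sum split: if_splits)
    then show "c i = 0"
      using v_indep c_high[of "i - d"] i by (cases "i < d") auto
  next
    show "prod_set n m L = {x. \<exists>c. x = (\<lambda>j. \<Sum>i<d + m. c i * w i j)}"
    proof (intro set_eqI iffI)
      fix x assume "x \<in> prod_set n m L"
      then obtain c where c: "xproj n x = (\<lambda>j. \<Sum>i<d. c i * v i j)" and x: "x \<in> cspace (n + m)"
        using v_span unfolding prod_set_def by auto
      define c' where "c' i = (if i < d then c i else x (n + (i - d)))" for i
      have c'_low: "(\<Sum>i<d. c' i * v i j) = (\<Sum>i<d. c i * v i j)" for j
        by (simp add: c'_def)
      have "x j = (\<Sum>i<d + m. c' i * w i j)" for j
      proof (cases "j < n")
        case True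
        then show ?thesis using fun_cong[OF c, of j] by (simp add: w_sum c'_low)
      next
        case False
        then show ?thesis using x by (auto simp: w_sum c'_low v_high c'_def cspace_def)
      qed
      then show "x \<in> {x. \<exists>c. x = (\<lambda>j. \<Sum>i<d + m. c i * w i j)}" by blast
    next
      fix x assume "x \<in> {x. \<exists>c. x = (\<lambda>j. \<Sum>i<d + m. c i * w i j)}"
      then obtain c where c: "x = (\<lambda>j. \<Sum>i<d + m. c i * w i j)" by auto
      have "x \<in> cspace (n + m)"
        unfolding cspace_def c by (auto simp: w_sum v_high)
      moreover have "xproj n x = (\<lambda>j. \<Sum>i<d. c i * v i j)"
        unfolding c by (auto simp: fun_eq_iff w_sum v_high)
      ultimately show "x \<in> prod_set n m L"
        using v_span unfolding prod_set_def by auto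
    qed
  qed
qed

lemma subspace_arrangement_cspace: "subspace_arrangement n k C \<Longrightarrow> C \<subseteq> cspace n"
  unfolding subspace_arrangement_def lin_subspace_def by auto

lemma subspace_arrangement_prod_set:
  assumes "subspace_arrangement n k C"
  shows "subspace_arrangement (n + m) k (prod_set n m C)"
proof -
  obtain A where A: "k \<le> n" "finite A" "A \<noteq> {}" "C = \<Union>A"
    and comp: "\<forall>L\<in>A. lin_subspace n L \<and> has_dim L (n - k)"
    using assms unfolding subspace_arrangement_def by blast
  have "prod_set n m C = \<Union>(prod_set n m ` A)"
    unfolding A(4) prod_set_def by auto
  moreover have "n + m - k = (n - k) + m"
    using A(1) by simp
  then have "\<forall>L'\<in>prod_set n m ` A. lin_subspace (n + m) L' \<and> has_dim L' (n + m - k)"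
    using comp lin_subspace_prod_set has_dim_prod_set by auto
  ultimately show ?thesis
    unfolding subspace_arrangement_def using A by (intro conjI exI[of _ "prod_set n m ` A"]) auto
qed

lemma regular_seq_prod:
  assumes reg: "regular_seq n hs k"
  shows "regular_seq (n + m) hs k"
proof -
  have hs: "\<forall>j<k. hs j \<in> polys n"
    using reg unfolding regular_seq_def by auto
  then have hs': "\<forall>j<k. hs j \<in> polys (n + m)"
    using polys_mono[of n "n + m"] by auto
  have "1 \<notin> gen_ideal (n + m) hs k"
    using reg gen_ideal_prod_iff[OF hs, of 1 m] ycoeff_one
    unfolding regular_seq_def by (metis polys_single keys_zero empty_subsetI single_one)
  moreover have "g \<in> gen_ideal (n + m) hs i"
    if i: "i < k" and g: "g \<in> polys (n + m)" and gh: "g * hs i \<in> gen_ideal (n + m) hs i" for i g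
  proof -
    have hsi: "\<forall>j<i. hs j \<in> polys n" and hi: "hs i \<in> polys n"
      using hs i by auto
    have "ycoeff n b (g * hs i) \<in> gen_ideal n hs i" for b
      using gen_ideal_prod_iff[OF hsi] gh g hs' i polys_mult by blast
    then have "ycoeff n b g * hs i \<in> gen_ideal n hs i" for b
      by (metis ycoeff_mult_left hi mult.commute)
    then have "ycoeff n b g \<in> gen_ideal n hs i" for b
      using reg i ycoeff_polys unfolding regular_seq_def by blast
    then show ?thesis
      using gen_ideal_prod_iff[OF hsi g] by blast
  qed
  ultimately show ?thesis
    unfolding regular_seq_def using hs' by blast
qed

lemma reduced_CI_prod_set:
  assumes "reduced_CI n k C hs"
  shows "reduced_CI (n + m) k (prod_set n m C) hs"
proof -
  have arr: "subspace_arrangement n k C" and reg: "regular_seq n hs k"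
    and eq: "van_ideal n C = gen_ideal n hs k"
    using assms unfolding reduced_CI_def by auto
  have eq': "van_ideal (n + m) (prod_set n m C) = gen_ideal (n + m) hs k"
    using reg subspace_arrangement_cspace[OF arr] eq
    by (intro van_ideal_prod_set_eq_gen_ideal) (auto simp: regular_seq_def)
  then have "radical_ideal (n + m) (gen_ideal (n + m) hs k)"
    unfolding radical_ideal_def eq'[symmetric] van_ideal_def by (auto simp: peval_power)
  then show ?thesis
    using assms eq' subspace_arrangement_prod_set[OF arr] regular_seq_prod[OF reg]
    unfolding reduced_CI_def by blast
qed

section \<open>Differential forms on a product\<close>

definition dx_within :: "nat set \<Rightarrow> pform \<Rightarrow> bool" where
  "dx_within V \<omega> \<longleftrightarrow> (\<forall>I. \<omega> I \<noteq> 0 \<longrightarrow> I \<subseteq> V)"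

lemma forms_on_dx_within: "\<omega> \<in> forms_on V q \<Longrightarrow> dx_within V \<omega>"
  unfolding forms_on_def dx_within_def by blast

lemma forms_on_polys: "\<omega> \<in> forms_on {..<N} q \<Longrightarrow> \<omega> I \<in> polys N"
  unfolding forms_on_def polys_def by blast

lemma wsign_eq_1: "(\<And>i j. i \<in> I \<Longrightarrow> j \<in> J \<Longrightarrow> i \<le> j) \<Longrightarrow> wsign I J = 1"
proof -
  assume "\<And>i j. i \<in> I \<Longrightarrow> j \<in> J \<Longrightarrow> i \<le> j"
  then have "{(i, j). i \<in> I \<and> j \<in> J \<and> j < i} = {}"
    by fastforce
  then show ?thesis
    unfolding wsign_def by (metis card.empty power_0)
qed

lemma wsign_singleton_cong: "{j\<in>J. j < i} = {j\<in>J'. j < i} \<Longrightarrow> wsign {i} J = wsign {i} J'"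
proof -
  assume "{j\<in>J. j < i} = {j\<in>J'. j < i}"
  then have "{(i', j). i' \<in> {i} \<and> j \<in> J \<and> j < i'} = {(i', j). i' \<in> {i} \<and> j \<in> J' \<and> j < i'}"
    by blast
  then show ?thesis
    unfolding wsign_def by metis
qed

lemma wedge_infinite: "infinite K \<Longrightarrow> wedge \<alpha> \<beta> K = 0"
  unfolding wedge_def by simp

lemma wedge_dpoly:
  assumes "finite K"
  shows "wedge (dpoly f) \<omega> K = (\<Sum>i\<in>K. wsign {i} (K - {i}) * pdiff i f * \<omega> (K - {i}))"
proof -
  have "wedge (dpoly f) \<omega> K = (\<Sum>I\<in>(\<lambda>i. {i}) ` K. wsign I (K - I) * dpoly f I * \<omega> (K - I))"
    unfolding wedge_def
  proof (rule sum.mono_neutral_right)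
    show "\<forall>I\<in>Pow K - (\<lambda>i. {i}) ` K. wsign I (K - I) * dpoly f I * \<omega> (K - I) = 0"
      by (auto simp: dpoly_def card_1_singleton_iff)
  qed (use assms in auto)
  also have "\<dots> = (\<Sum>i\<in>K. wsign {i} (K - {i}) * pdiff i f * \<omega> (K - {i}))"
    by (subst sum.reindex) (auto simp: inj_on_def dpoly_def)
  finally show ?thesis .
qed

lemma wedge_split:
  assumes \<alpha>: "dx_within {..<n} \<alpha>" and \<beta>: "dx_within {n..<n + m} \<beta>"
  shows "wedge \<alpha> \<beta> K = \<alpha> (K \<inter> {..<n}) * \<beta> (K - {..<n})"
proof (cases "finite K")
  case False
  then have "\<not> K - {..<n} \<subseteq> {n..<n + m}"
    by (metis finite_Diff2 finite_lessThan finite_atLeastLessThan finite_subset)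
  then have "\<beta> (K - {..<n}) = 0"
    using \<beta> unfolding dx_within_def by blast
  then show ?thesis
    using False by (simp add: wedge_infinite)
next
  case True
  let ?X = "K \<inter> {..<n}"
  let ?F = "\<lambda>I. wsign I (K - I) * \<alpha> I * \<beta> (K - I)"
  have "?F I = 0" if "I \<in> Pow K" "I \<noteq> ?X" for I
  proof (rule ccontr)
    assume "?F I \<noteq> 0"
    then have "I \<subseteq> {..<n}" "K - I \<subseteq> {n..<n + m}"
      using \<alpha> \<beta> unfolding dx_within_def by auto
    then show False using that by auto
  qed
  then have "wedge \<alpha> \<beta> K = (\<Sum>I\<in>Pow K. if I = ?X then ?F ?X else 0)"
    unfolding wedge_def by (intro sum.cong refl) auto
  also have "\<dots> = ?F ?X"
    using True by (simp add: sum.delta)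
  also have "wsign ?X (K - ?X) = 1"
    by (rule wsign_eq_1) auto
  finally show ?thesis
    by (simp add: Diff_Int)
qed

lemma van_ideal_zero: "0 \<in> van_ideal N Z"
  by (simp add: van_ideal_def)

lemma van_ideal_add: "p \<in> van_ideal N Z \<Longrightarrow> q \<in> van_ideal N Z \<Longrightarrow> p + q \<in> van_ideal N Z"
  unfolding van_ideal_def by (auto simp: peval_add polys_add)

lemma van_ideal_mult: "r \<in> polys N \<Longrightarrow> p \<in> van_ideal N Z \<Longrightarrow> r * p \<in> van_ideal N Z"
  unfolding van_ideal_def by (auto simp: peval_mult polys_mult)

lemma van_ideal_sum:
  "(\<And>a. a \<in> A \<Longrightarrow> f a \<in> van_ideal N Z) \<Longrightarrow> (\<Sum>a\<in>A. f a) \<in> van_ideal N Z"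
  by (induction A rule: infinite_finite_induct) (auto simp: van_ideal_zero van_ideal_add)

lemma log_num_zero: "(\<lambda>K. 0) \<in> log_num N Z C q"
  unfolding log_num_def forms_on_def van_ideal_def wedge_def by simp

lemma log_num_add:
  assumes "\<eta>1 \<in> log_num N Z C q" "\<eta>2 \<in> log_num N Z C q"
  shows "(\<lambda>K. \<eta>1 K + \<eta>2 K) \<in> log_num N Z C q"
proof -
  have "(\<lambda>K. \<eta>1 K + \<eta>2 K) \<in> forms_on {..<N} q"
    using assms pvars_add unfolding log_num_def forms_on_def
    by (smt (verit) add.right_neutral mem_Collect_eq order_trans sup.bounded_iff)
  moreover have "wedge \<alpha> (\<lambda>K. \<eta>1 K + \<eta>2 K) K = wedge \<alpha> \<eta>1 K + wedge \<alpha> \<eta>2 K" for \<alpha> K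
    unfolding wedge_def by (simp add: distrib_left sum.distrib)
  ultimately show ?thesis
    using assms unfolding log_num_def by (auto simp: distrib_left van_ideal_add)
qed

lemma forms_on_wedge:
  assumes \<alpha>: "\<alpha> \<in> forms_on {..<n} j" and \<beta>: "\<beta> \<in> forms_on {n..<n + m} (q - j)" and "j \<le> q"
  shows "wedge \<alpha> \<beta> \<in> forms_on {..<n + m} q"
  unfolding forms_on_def
proof (intro CollectI allI conjI impI)
  fix K
  have split: "wedge \<alpha> \<beta> K = \<alpha> (K \<inter> {..<n}) * \<beta> (K - {..<n})"
    using assms forms_on_dx_within wedge_split by blast
  have "\<alpha> (K \<inter> {..<n}) \<in> polys (n + m)" "\<beta> (K - {..<n}) \<in> polys (n + m)"
    using \<alpha> \<beta> polys_mono[of n "n + m"] forms_on_polys unfolding forms_on_def polys_def by fastforce+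
  then show "pvars (wedge \<alpha> \<beta> K) \<subseteq> {..<n + m}"
    unfolding split using polys_mult unfolding polys_def by blast
  assume "wedge \<alpha> \<beta> K \<noteq> 0"
  then have "\<alpha> (K \<inter> {..<n}) \<noteq> 0" "\<beta> (K - {..<n}) \<noteq> 0"
    by (auto simp: split)
  then have x: "finite (K \<inter> {..<n})" "card (K \<inter> {..<n}) = j"
    and y: "K - {..<n} \<subseteq> {n..<n + m}" "finite (K - {..<n})" "card (K - {..<n}) = q - j"
    using \<alpha> \<beta> unfolding forms_on_def by auto
  have K: "K = (K \<inter> {..<n}) \<union> (K - {..<n})"
    by auto
  show "K \<subseteq> {..<n + m}"
    using y(1) by auto
  show "finite K"
    using x y by (subst K) auto
  have "card K = card (K \<inter> {..<n}) + card (K - {..<n})"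
    using x y by (subst K, subst card_Un_disjoint) auto
  then show "card K = q"
    using x y \<open>j \<le> q\<close> by simp
qed

lemma log_num_coeff_mult_prod:
  assumes "Z \<subseteq> cspace n" "f \<in> van_ideal (n + m) (prod_set n m Z)" "\<alpha> \<in> log_num n Z C j"
  shows "f * \<alpha> I \<in> van_ideal (n + m) (prod_set n m C)"
proof (rule in_van_ideal_prod_set_if_ycoeffs)
  have f: "f \<in> polys (n + m)" and \<alpha>: "\<alpha> I \<in> polys n"
    using assms(2,3) unfolding van_ideal_def log_num_def by (auto intro: forms_on_polys)
  then show "f * \<alpha> I \<in> polys (n + m)"
    using polys_mono[of n "n + m"] by (auto intro: polys_mult)
  have "ycoeff n b (f * \<alpha> I) = ycoeff n b f * \<alpha> I" for b
    using ycoeff_mult_left[OF \<alpha>, of b f] by (metis mult.commute)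
  then show "\<forall>b. ycoeff n b (f * \<alpha> I) \<in> van_ideal n C"
    using ycoeff_in_van_ideal[OF assms(1,2)] assms(3) unfolding log_num_def by simp
qed

lemma log_num_wedge_dpoly_prod:
  assumes "Z \<subseteq> cspace n" "f \<in> van_ideal (n + m) (prod_set n m Z)" "\<alpha> \<in> log_num n Z C j"
    and L: "finite L" "L \<subseteq> {..<n}"
  shows "wedge (dpoly f) \<alpha> L \<in> van_ideal (n + m) (prod_set n m C)"
proof (rule in_van_ideal_prod_set_if_ycoeffs)
  have f: "f \<in> polys (n + m)" and \<alpha>: "\<alpha> I \<in> polys n" for I
    using assms(2,3) unfolding van_ideal_def log_num_def by (auto intro: forms_on_polys)
  have expand: "wedge (dpoly g) \<alpha> L = (\<Sum>i\<in>L. (wsign {i} (L - {i}) * \<alpha> (L - {i})) * pdiff i g)" for g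
    unfolding wedge_dpoly[OF L(1)] by (simp add: ac_simps)
  show "wedge (dpoly f) \<alpha> L \<in> polys (n + m)"
    unfolding expand using \<alpha> polys_mono[of n "n + m"]
    by (intro polys_sum polys_mult wsign_polys polys_pdiff f) auto
  have "ycoeff n b (wedge (dpoly f) \<alpha> L) = wedge (dpoly (ycoeff n b f)) \<alpha> L" for b
    unfolding expand ycoeff_sum using L(2)
    by (intro sum.cong refl) (auto simp: ycoeff_mult_left polys_mult wsign_polys \<alpha> ycoeff_pdiff_x)
  then show "\<forall>b. ycoeff n b (wedge (dpoly f) \<alpha> L) \<in> van_ideal n C"
    using ycoeff_in_van_ideal[OF assms(1,2)] assms(3) unfolding log_num_def by auto
qed

lemma log_num_pdiff_mult_prod:
  assumes "Z \<subseteq> cspace n" "f \<in> van_ideal (n + m) (prod_set n m Z)" "\<alpha> \<in> log_num n Z C j"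
    and "n \<le> i"
  shows "pdiff i f * \<alpha> I \<in> van_ideal (n + m) (prod_set n m C)"
proof (rule in_van_ideal_prod_set_if_ycoeffs)
  have f: "f \<in> polys (n + m)" and \<alpha>: "\<alpha> I \<in> polys n"
    using assms(2,3) unfolding van_ideal_def log_num_def by (auto intro: forms_on_polys)
  then show "pdiff i f * \<alpha> I \<in> polys (n + m)"
    using polys_mono[of n "n + m"] by (auto intro: polys_mult polys_pdiff)
  have "ycoeff n b (pdiff i f * \<alpha> I) = (of_nat (lookup b i + 1) * ycoeff n (b + single i 1) f) * \<alpha> I" for b
    by (simp only: mult.commute[of "pdiff i f"] ycoeff_mult_left[OF \<alpha>] ycoeff_pdiff_y[OF assms(4)])
      (rule mult.commute)
  moreover have "of_nat (lookup b i + 1) * ycoeff n (b + single i 1) f \<in> van_ideal n Z" for b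
    by (rule van_ideal_mult[OF polys_of_nat ycoeff_in_van_ideal[OF assms(1,2)]])
  ultimately show "\<forall>b. ycoeff n b (pdiff i f * \<alpha> I) \<in> van_ideal n C"
    using assms(3) unfolding log_num_def by auto
qed

lemma wedge_dpoly_wedge_prod:
  assumes Z: "Z \<subseteq> cspace n" and f: "f \<in> van_ideal (n + m) (prod_set n m Z)"
    and \<alpha>: "\<alpha> \<in> log_num n Z C j" and \<beta>: "\<beta> \<in> forms_on {n..<n + m} (q - j)"
  shows "wedge (dpoly f) (wedge \<alpha> \<beta>) K \<in> van_ideal (n + m) (prod_set n m C)"
proof (cases "finite K")
  case False
  then show ?thesis by (simp add: wedge_infinite van_ideal_zero)
next
  case True
  let ?X = "K \<inter> {..<n}" and ?Y = "K - {..<n}"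
  let ?t = "\<lambda>i. wsign {i} (K - {i}) * pdiff i f * wedge \<alpha> \<beta> (K - {i})"
  have "\<alpha> \<in> forms_on {..<n} j"
    using \<alpha> unfolding log_num_def by blast
  note split = wedge_split[OF forms_on_dx_within[OF this] forms_on_dx_within[OF \<beta>]]
  have \<beta>_polys: "\<beta> J \<in> polys (n + m)" for J
    using \<beta> unfolding forms_on_def polys_def by fastforce
  have "wedge (dpoly f) (wedge \<alpha> \<beta>) K = (\<Sum>i\<in>?X. ?t i) + (\<Sum>i\<in>?Y. ?t i)"
    unfolding wedge_dpoly[OF True] using True
    by (subst sum.union_disjoint[symmetric]) (auto intro: sum.cong)
  moreover have "finite ?X"
    using True by simp
  then have "(\<Sum>i\<in>?X. ?t i) = \<beta> ?Y * wedge (dpoly f) \<alpha> ?X"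
    unfolding wedge_dpoly[OF \<open>finite ?X\<close>] sum_distrib_left
  proof (intro sum.cong refl)
    fix i assume i: "i \<in> ?X"
    then have "(K - {i}) \<inter> {..<n} = ?X - {i}" "(K - {i}) - {..<n} = ?Y"
      "wsign {i} (K - {i}) = wsign {i} (?X - {i})"
      by (auto intro!: wsign_singleton_cong)
    then show "?t i = \<beta> ?Y * (wsign {i} (?X - {i}) * pdiff i f * \<alpha> (?X - {i}))"
      by (simp add: split ac_simps)
  qed
  moreover have "\<beta> ?Y * wedge (dpoly f) \<alpha> ?X \<in> van_ideal (n + m) (prod_set n m C)"
    using True by (intro van_ideal_mult[OF \<beta>_polys] log_num_wedge_dpoly_prod[OF Z f \<alpha>]) auto
  moreover have "(\<Sum>i\<in>?Y. ?t i) \<in> van_ideal (n + m) (prod_set n m C)"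
  proof (rule van_ideal_sum)
    fix i assume i: "i \<in> ?Y"
    have "(K - {i}) \<inter> {..<n} = ?X" "(K - {i}) - {..<n} = ?Y - {i}"
      using i by auto
    then have "?t i = (wsign {i} (K - {i}) * \<beta> (?Y - {i})) * (pdiff i f * \<alpha> ?X)"
      by (simp add: split ac_simps)
    also have "\<dots> \<in> van_ideal (n + m) (prod_set n m C)"
      using i by (intro van_ideal_mult polys_mult wsign_polys \<beta>_polys log_num_pdiff_mult_prod[OF Z f \<alpha>]) auto
    finally show "?t i \<in> van_ideal (n + m) (prod_set n m C)" .
  qed
  ultimately show ?thesis
    by (simp add: van_ideal_add)
qed

lemma log_num_wedge_prod:
  assumes Z: "Z \<subseteq> cspace n" and \<alpha>: "\<alpha> \<in> log_num n Z C j"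
    and \<beta>: "\<beta> \<in> forms_on {n..<n + m} (q - j)" and "j \<le> q"
  shows "wedge \<alpha> \<beta> \<in> log_num (n + m) (prod_set n m Z) (prod_set n m C) q"
proof -
  have \<alpha>_forms: "\<alpha> \<in> forms_on {..<n} j"
    using \<alpha> unfolding log_num_def by blast
  have "f * wedge \<alpha> \<beta> K \<in> van_ideal (n + m) (prod_set n m C)"
    if f: "f \<in> van_ideal (n + m) (prod_set n m Z)" for f K
  proof -
    have "f * wedge \<alpha> \<beta> K = \<beta> (K - {..<n}) * (f * \<alpha> (K \<inter> {..<n}))"
      by (simp add: wedge_split[OF forms_on_dx_within[OF \<alpha>_forms] forms_on_dx_within[OF \<beta>]] ac_simps)
    moreover have "\<beta> (K - {..<n}) \<in> polys (n + m)"
      using \<beta> unfolding forms_on_def polys_def by fastforce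
    ultimately show ?thesis
      using van_ideal_mult log_num_coeff_mult_prod[OF Z f \<alpha>] by metis
  qed
  moreover have "wedge \<alpha> \<beta> \<in> forms_on {..<n + m} q"
    by (rule forms_on_wedge[OF \<alpha>_forms \<beta> \<open>j \<le> q\<close>])
  ultimately show ?thesis
    using wedge_dpoly_wedge_prod[OF Z _ \<alpha> \<beta>] unfolding log_num_def by blast
qed

lemma tensor_num_subset_log_num:
  assumes "Z \<subseteq> cspace n"
  shows "tensor_num n m Z C q \<subseteq> log_num (n + m) (prod_set n m Z) (prod_set n m C) q"
proof
  fix \<omega> assume "\<omega> \<in> tensor_num n m Z C q"
  then obtain ps where ps: "\<forall>(j, \<alpha>, \<beta>) \<in> set ps. j \<le> q \<and> \<alpha> \<in> log_num n Z C j
      \<and> \<beta> \<in> forms_on {n..<n + m} (q - j)"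
    and \<omega>: "\<omega> = (\<lambda>K. sum_list (map (\<lambda>(j, \<alpha>, \<beta>). wedge \<alpha> \<beta> K) ps))"
    unfolding tensor_num_def by blast
  from ps have "(\<lambda>K. sum_list (map (\<lambda>(j, \<alpha>, \<beta>). wedge \<alpha> \<beta> K) ps))
      \<in> log_num (n + m) (prod_set n m Z) (prod_set n m C) q"
  proof (induction ps)
    case Nil
    then show ?case by (simp add: log_num_zero)
  next
    case (Cons x ps)
    then show ?case
      using log_num_add[OF log_num_wedge_prod[OF assms] Cons.IH] by (auto split: prod.splits)
  qed
  then show "\<omega> \<in> log_num (n + m) (prod_set n m Z) (prod_set n m C) q"
    using \<omega> by simp
qed

lemma tensor_num_sum:
  assumes "finite F"
    and "\<forall>i\<in>F. j i \<le> q \<and> \<alpha> i \<in> log_num n Z C (j i) \<and> \<beta> i \<in> forms_on {n..<n + m} (q - j i)"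
  shows "(\<lambda>K. \<Sum>i\<in>F. wedge (\<alpha> i) (\<beta> i) K) \<in> tensor_num n m Z C q"
proof -
  obtain xs where xs: "set xs = F" "distinct xs"
    using finite_distinct_list[OF assms(1)] by blast
  let ?ps = "map (\<lambda>i. (j i, \<alpha> i, \<beta> i)) xs"
  have "sum_list (map (\<lambda>(j, \<alpha>, \<beta>). wedge \<alpha> \<beta> K) ?ps) = (\<Sum>i\<in>F. wedge (\<alpha> i) (\<beta> i) K)" for K
    using sum_list_distinct_conv_sum_set[OF xs(2)] xs(1) by (simp add: comp_def)
  then show ?thesis
    unfolding tensor_num_def using assms(2) xs(1) by (intro CollectI exI[of _ ?ps]) auto
qed

text \<open>\<open>ymonomial_form J b\<close> is \<open>y^b dy_J\<close>, and a form \<open>\<eta>\<close> on \<open>C^(n+m)\<close> is the sum over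
  \<open>J\<close> and \<open>b\<close> of \<open>xcomponent n \<eta> J b \<and> y^b dy_J\<close> (see \<open>forms_on_decomp\<close>).\<close>

definition xcomponent :: "nat \<Rightarrow> pform \<Rightarrow> nat set \<Rightarrow> (nat \<Rightarrow>\<^sub>0 nat) \<Rightarrow> pform" where
  "xcomponent n \<eta> J b I = (if I \<subseteq> {..<n} then ycoeff n b (\<eta> (I \<union> J)) else 0)"

definition ymonomial_form :: "nat set \<Rightarrow> (nat \<Rightarrow>\<^sub>0 nat) \<Rightarrow> pform" where
  "ymonomial_form J b L = (if L = J then single b 1 else 0)"

lemma ymonomial_form_forms_on:
  assumes "J \<subseteq> {n..<n + m}" "keys b \<subseteq> {n..<n + m}"
  shows "ymonomial_form J b \<in> forms_on {n..<n + m} (card J)"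
  using assms finite_subset[OF assms(1)] pvars_single[of b 1]
  unfolding forms_on_def ymonomial_form_def by auto

lemma xcomponent_forms_on:
  assumes \<eta>: "\<eta> \<in> forms_on {..<n + m} q" and J: "J \<subseteq> {n..<n + m}"
  shows "xcomponent n \<eta> J b \<in> forms_on {..<n} (q - card J)"
  unfolding forms_on_def
proof (intro CollectI allI conjI impI)
  fix I
  show "pvars (xcomponent n \<eta> J b I) \<subseteq> {..<n}"
    using ycoeff_polys unfolding xcomponent_def polys_def by auto
  assume "xcomponent n \<eta> J b I \<noteq> 0"
  then have I: "I \<subseteq> {..<n}" and "\<eta> (I \<union> J) \<noteq> 0"
    unfolding xcomponent_def by (auto split: if_splits)
  then have IJ: "finite (I \<union> J)" "card (I \<union> J) = q"
    using \<eta> unfolding forms_on_def by auto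
  show "I \<subseteq> {..<n}" by fact
  show "finite I" using IJ by auto
  have "I \<inter> J = {}"
    using I J by fastforce
  then show "card I = q - card J"
    using IJ by (simp add: card_Un_disjoint)
qed

lemma wedge_xcomponent_ymonomial_form:
  assumes "J \<subseteq> {n..<n + m}"
  shows "wedge (xcomponent n \<eta> J b) (ymonomial_form J b) K
    = (if K - {..<n} = J then single b 1 * ycoeff n b (\<eta> K) else 0)"
proof -
  have "wedge (xcomponent n \<eta> J b) (ymonomial_form J b) K
      = xcomponent n \<eta> J b (K \<inter> {..<n}) * ymonomial_form J b (K - {..<n})"
    by (rule wedge_split) (use assms in \<open>auto simp: dx_within_def xcomponent_def ymonomial_form_def\<close>)
  moreover have "K \<inter> {..<n} \<union> J = K" if "K - {..<n} = J"
    using that by auto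
  ultimately show ?thesis
    by (simp add: xcomponent_def ymonomial_form_def mult.commute)
qed

lemma forms_on_decomp:
  assumes \<eta>: "\<eta> \<in> forms_on {..<n + m} q"
  defines "JS \<equiv> {J. J \<subseteq> {n..<n + m} \<and> card J \<le> q}"
    and "BS \<equiv> \<Union>K\<in>Pow {..<n + m}. ypart n ` keys (\<eta> K)"
  shows "\<eta> K = (\<Sum>(J, b)\<in>JS \<times> BS. wedge (xcomponent n \<eta> J b) (ymonomial_form J b) K)"
proof -
  have fin: "finite JS" "finite BS"
    unfolding JS_def BS_def by (auto intro: finite_subset[of _ "Pow {n..<n + m}"])
  have "(\<Sum>(J, b)\<in>JS \<times> BS. wedge (xcomponent n \<eta> J b) (ymonomial_form J b) K)
      = (\<Sum>J\<in>JS. if K - {..<n} = J then \<Sum>b\<in>BS. single b 1 * ycoeff n b (\<eta> K) else 0)"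
    unfolding sum.cartesian_product[symmetric] JS_def
    by (intro sum.cong refl) (clarsimp simp: wedge_xcomponent_ymonomial_form)
  also have "\<dots> = (if K - {..<n} \<in> JS then \<Sum>b\<in>BS. single b 1 * ycoeff n b (\<eta> K) else 0)"
    using fin by (simp add: sum.delta)
  also have "\<dots> = \<eta> K"
  proof (cases "\<eta> K = 0")
    case False
    then have K: "K \<subseteq> {..<n + m}" "finite K" "card K = q"
      using \<eta> unfolding forms_on_def by auto
    then have "card (K - {..<n}) \<le> q"
      by (metis Diff_subset card_mono)
    then have "K - {..<n} \<in> JS"
      using K unfolding JS_def by auto
    moreover have "ypart n ` keys (\<eta> K) \<subseteq> BS"
      using K unfolding BS_def by auto
    ultimately show ?thesis
      using ycoeff_decomp[OF fin(2)] by simp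
  qed simp
  finally show ?thesis ..
qed

lemma wedge_dpoly_xcomponent:
  assumes f: "f \<in> polys n" and J: "J \<subseteq> {n..<n + m}" and K: "finite K"
  shows "wedge (dpoly f) (xcomponent n \<eta> J b) K
    = (if K \<subseteq> {..<n} then ycoeff n b (wedge (dpoly f) \<eta> (K \<union> J)) else 0)"
proof -
  have pdiff_y: "pdiff i f = 0" if "n \<le> i" for i
    using f that by (intro pdiff_eq_0_if_notin_pvars) (auto simp: polys_def)
  have J_fin: "finite J"
    using J finite_subset by blast
  show ?thesis
  proof (cases "K \<subseteq> {..<n}")
    case True
    let ?t = "\<lambda>i. wsign {i} ((K \<union> J) - {i}) * pdiff i f * \<eta> ((K \<union> J) - {i})"
    have KJ: "K \<inter> J = {}"
      using True J by fastforce
    have "wedge (dpoly f) \<eta> (K \<union> J) = (\<Sum>i\<in>K. ?t i) + (\<Sum>i\<in>J. ?t i)"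
      using K J_fin KJ by (simp add: wedge_dpoly sum.union_disjoint)
    also have "(\<Sum>i\<in>J. ?t i) = 0"
      using J pdiff_y by (intro sum.neutral) auto
    finally have "ycoeff n b (wedge (dpoly f) \<eta> (K \<union> J)) = (\<Sum>i\<in>K. ycoeff n b (?t i))"
      by (simp add: ycoeff_sum)
    also have "\<dots> = wedge (dpoly f) (xcomponent n \<eta> J b) K"
      unfolding wedge_dpoly[OF K]
    proof (intro sum.cong refl)
      fix i assume i: "i \<in> K"
      then have "(K \<union> J) - {i} = (K - {i}) \<union> J" "K - {i} \<subseteq> {..<n}"
        using True KJ by auto
      moreover have "i < n"
        using i True by auto
      then have "wsign {i} ((K - {i}) \<union> J) = wsign {i} (K - {i})"
        using J by (intro wsign_singleton_cong) auto
      ultimately show "ycoeff n b (?t i) = wsign {i} (K - {i}) * pdiff i f * xcomponent n \<eta> J b (K - {i})"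
        by (simp add: xcomponent_def ycoeff_mult_left polys_mult wsign_polys polys_pdiff f)
    qed
    finally show ?thesis
      using True by simp
  next
    case False
    then obtain e where e: "e \<in> K" "n \<le> e"
      by (meson lessThan_iff not_le subsetI)
    have "wsign {i} (K - {i}) * pdiff i f * xcomponent n \<eta> J b (K - {i}) = 0" if "i \<in> K" for i
      using e pdiff_y by (cases "i = e") (auto simp: xcomponent_def)
    then show ?thesis
      using False by (simp add: wedge_dpoly[OF K] sum.neutral)
  qed
qed

lemma xcomponent_log_num:
  assumes Z: "Z \<subseteq> cspace n" and C: "C \<subseteq> cspace n"
    and \<eta>: "\<eta> \<in> log_num (n + m) (prod_set n m Z) (prod_set n m C) q" and J: "J \<subseteq> {n..<n + m}"
  shows "xcomponent n \<eta> J b \<in> log_num n Z C (q - card J)"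
proof -
  have \<eta>_van: "f * \<eta> I \<in> van_ideal (n + m) (prod_set n m C)"
      "wedge (dpoly f) \<eta> K \<in> van_ideal (n + m) (prod_set n m C)"
    if "f \<in> van_ideal n Z" for f I K
    using \<eta> that van_ideal_subset_prod_set unfolding log_num_def by blast+
  have "f * xcomponent n \<eta> J b I \<in> van_ideal n C" if f: "f \<in> van_ideal n Z" for f I
  proof -
    have "f * xcomponent n \<eta> J b I = (if I \<subseteq> {..<n} then ycoeff n b (f * \<eta> (I \<union> J)) else 0)"
      using f unfolding van_ideal_def by (simp add: xcomponent_def ycoeff_mult_left)
    then show ?thesis
      using ycoeff_in_van_ideal[OF C \<eta>_van(1)[OF f]] by (simp add: van_ideal_zero)
  qed
  moreover have "wedge (dpoly f) (xcomponent n \<eta> J b) K \<in> van_ideal n C"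
    if f: "f \<in> van_ideal n Z" for f K
  proof (cases "finite K")
    case True
    have "f \<in> polys n"
      using f unfolding van_ideal_def by blast
    then show ?thesis
      using ycoeff_in_van_ideal[OF C \<eta>_van(2)[OF f]]
      by (simp add: wedge_dpoly_xcomponent[OF _ J True] van_ideal_zero)
  qed (simp add: wedge_infinite van_ideal_zero)
  moreover have "xcomponent n \<eta> J b \<in> forms_on {..<n} (q - card J)"
    using \<eta> J xcomponent_forms_on unfolding log_num_def by blast
  ultimately show ?thesis
    unfolding log_num_def by blast
qed

lemma log_num_subset_tensor_num:
  assumes Z: "Z \<subseteq> cspace n" and C: "C \<subseteq> cspace n"
  shows "log_num (n + m) (prod_set n m Z) (prod_set n m C) q \<subseteq> tensor_num n m Z C q"
proof
  fix \<eta> assume \<eta>: "\<eta> \<in> log_num (n + m) (prod_set n m Z) (prod_set n m C) q"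
  then have \<eta>_forms: "\<eta> \<in> forms_on {..<n + m} q"
    unfolding log_num_def by blast
  define JS where "JS = {J. J \<subseteq> {n..<n + m} \<and> card J \<le> q}"
  define BS where "BS = (\<Union>K\<in>Pow {..<n + m}. ypart n ` keys (\<eta> K))"
  have "finite (JS \<times> BS)"
    unfolding JS_def BS_def by (auto intro: finite_subset[of _ "Pow {n..<n + m}"])
  moreover have "q - card J \<le> q \<and> xcomponent n \<eta> J b \<in> log_num n Z C (q - card J)
      \<and> ymonomial_form J b \<in> forms_on {n..<n + m} (q - (q - card J))"
    if "J \<in> JS" "b \<in> BS" for J b
  proof -
    have J: "J \<subseteq> {n..<n + m}" "card J \<le> q"
      using that(1) unfolding JS_def by auto
    moreover have "keys b \<subseteq> {n..<n + m}"
      using that(2) ypart_keys_subset forms_on_polys[OF \<eta>_forms] unfolding BS_def by blast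
    ultimately show ?thesis
      using xcomponent_log_num[OF Z C \<eta> J(1)] ymonomial_form_forms_on[OF J(1)] by simp
  qed
  ultimately have "(\<lambda>K. \<Sum>i\<in>JS \<times> BS. wedge (xcomponent n \<eta> (fst i) (snd i))
      (ymonomial_form (fst i) (snd i)) K) \<in> tensor_num n m Z C q"
    by (intro tensor_num_sum[where j = "\<lambda>i. q - card (fst i)"]) auto
  moreover have "\<eta> = (\<lambda>K. \<Sum>(J, b)\<in>JS \<times> BS. wedge (xcomponent n \<eta> J b) (ymonomial_form J b) K)"
    using forms_on_decomp[OF \<eta>_forms, folded JS_def BS_def] by (rule ext)
  ultimately show "\<eta> \<in> tensor_num n m Z C q"
    by (simp add: split_def)
qed

theorem proposition4p8:
  fixes n m k :: nat and Z C0 :: "(nat \<Rightarrow> complex) set" and hs :: "nat \<Rightarrow> mpoly"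
  assumes "n \<ge> 1" and "m \<ge> 1"
    and "subspace_arrangement n k Z"
    and "reduced_CI n k C0 hs"
    and "Z \<subseteq> C0"
  shows "reduced_CI (n + m) k (prod_set n m C0) hs \<and> prod_set n m Z \<subseteq> prod_set n m C0 \<and>
         (\<forall>q. log_num (n + m) (prod_set n m Z) (prod_set n m C0) q = tensor_num n m Z C0 q)"
proof -
  have Z: "Z \<subseteq> cspace n"
    using assms(3) by (rule subspace_arrangement_cspace)
  have C0: "C0 \<subseteq> cspace n"
    using assms(4) subspace_arrangement_cspace unfolding reduced_CI_def by blast
  have "prod_set n m Z \<subseteq> prod_set n m C0"
    using assms(5) unfolding prod_set_def by auto
  then show ?thesis
    using reduced_CI_prod_set[OF assms(4)] log_num_subset_tensor_num[OF Z C0]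
      tensor_num_subset_log_num[OF Z] by blast
qed

end
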